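(* There exists a locally finite poset $P$ with a minimum element such that: (a) $P$ has the Möbius nonvanishing property: for every $x\in P$, the set $\{y\in P : \mu_P(x,y)\neq 0\}$ is infinite; and (b) $P$ does not have property $\mathcal{H}_2$: there is a two-element subset $S\subset P$ such that for each $z\in S$ there are only finitely many $x\in P$ with $x\geqslant z$ and $x\not\geqslant y$ for the other element $y\in S\setminus\{z\}$. In particular, $P$ has the Möbius nonvanishing property but does not have the Möbius uncertainty property, i.e. there exist functions $f,g:P\to\mathbb{C}$, neither identically zero, with $g(z)=\sum_{x\leqslant z}f(x)$ for all $z\in P$ and both $\{x: f(x)\neq 0\}$ and $\{x:g(x)\neq0\}$ finite.
   Context: A poset is locally finite if every interval $[x,y]=\{z: x\leqslant z\leqslant y\}$ is finite. The Möbius function $\mu_P$ of $P$ is defined on pairs $x,y\in P$ by $\mu_P(x,y)=1$ if $x=y$, $\mu_P(x,y)=-\sum_{x\leqslant z<y}\mu_P(x,z)$ if $x<y$, and $\mu_P(x,y)=0$ if $x\not\leqslant y$. *)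

theory Defs
  imports Complex_Main
begin

text \<open>A poset is represented by an order relation r :: ('a * 'a) set on the
  carrier UNIV :: 'a set, i.e. (x,y) in r means x <= y.\<close>

definition Icc_rel :: "('a \<times> 'a) set \<Rightarrow> 'a \<Rightarrow> 'a \<Rightarrow> 'a set" where
  "Icc_rel r x y = {z. (x, z) \<in> r \<and> (z, y) \<in> r}"

definition locally_finite_rel :: "('a \<times> 'a) set \<Rightarrow> bool" where
  "locally_finite_rel r \<longleftrightarrow> (\<forall>x y. finite (Icc_rel r x y))"

text \<open>The extra condition card (Icc_rel r x z) < card (Icc_rel r x y)
  in the summation range is only a termination device: for a locally finite
  partial order and x <= z < y it always holds, since [x,z] is a proper subset of
  the finite set [x,y].\<close>

function mobius :: "('a \<times> 'a) set \<Rightarrow> 'a \<Rightarrow> 'a \<Rightarrow> int" where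
  "mobius r x y =
     (if x = y then 1
      else if (x, y) \<in> r then
        - (\<Sum>z\<in>{z. (x, z) \<in> r \<and> (z, y) \<in> r \<and> z \<noteq> y
                     \<and> card (Icc_rel r x z) < card (Icc_rel r x y)}. mobius r x z)
      else 0)"
  by auto
termination
  by (relation "measure (\<lambda>(r, x, y). card (Icc_rel r x y))") auto

end

theory Submission
  imports Defs
begin

text \<open>Take the ordinal sum of a point and infinitely many two-element antichains:
  on nat, rank the elements {0}, {1, 2}, {3, 4}, ... and let x < y iff rank x < rank y.
  For x < y every rank n strictly between them contributes two elements to the
  interval, so by induction on the rank of y the Moebius function is
  mu(x,y) = -(1 + 2 * sum (-1)^(n - rank x)) = (-1)^(rank y - rank x), which never
  vanishes. Two distinct elements a, b of equal rank have the same strict upper set,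
  which kills property H_2, and for the same reason f = g = delta_a - delta_b satisfies
  g(z) = sum of f(x) over x <= z.\<close>

declare mobius.simps [simp del]

definition level_rel :: "('a \<Rightarrow> nat) \<Rightarrow> ('a \<times> 'a) set" where
  "level_rel lv = {(x, y). x = y \<or> lv x < lv y}"

lemma partial_order_level_rel: "partial_order_on UNIV (level_rel lv)"
  unfolding partial_order_on_def preorder_on_def refl_on_def trans_def antisym_def level_rel_def
  by auto

lemma finite_levels_below:
  fixes lv :: "'a \<Rightarrow> nat"
  assumes "\<And>n. finite {z. lv z = n}"
  shows "finite {z. lv z < N}"
proof -
  have "{z. lv z < N} = (\<Union>n<N. {z. lv z = n})"
    by auto
  then show ?thesis
    using assms by simp
qed

lemma finite_down_level_rel:
  fixes lv :: "'a \<Rightarrow> nat"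
  assumes "\<And>n. finite {z. lv z = n}"
  shows "finite {x. (x, y) \<in> level_rel lv}"
proof (rule finite_subset)
  show "{x. (x, y) \<in> level_rel lv} \<subseteq> {z. lv z < Suc (lv y)}"
    by (auto simp: level_rel_def)
qed (rule finite_levels_below[OF assms])

lemma locally_finite_level_rel:
  fixes lv :: "'a \<Rightarrow> nat"
  assumes "\<And>n. finite {z. lv z = n}"
  shows "locally_finite_rel (level_rel lv)"
  unfolding locally_finite_rel_def
proof (intro allI)
  fix x y
  have "Icc_rel (level_rel lv) x y \<subseteq> {z. (z, y) \<in> level_rel lv}"
    by (auto simp: Icc_rel_def)
  then show "finite (Icc_rel (level_rel lv) x y)"
    using finite_down_level_rel[OF assms] by (rule finite_subset)
qed

lemma up_diff_level_rel_same_level: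
  assumes "lv a = lv b" "a \<noteq> b"
  shows "{x. (a, x) \<in> level_rel lv \<and> (b, x) \<notin> level_rel lv} = {a}"
  using assms by (auto simp: level_rel_def)

lemma sum_down_level_rel_dipole:
  assumes "finite {x. (x, z) \<in> level_rel lv}" "lv a = lv b" "a \<noteq> b"
  shows "(\<Sum>x\<in>{x. (x, z) \<in> level_rel lv}. of_bool (x = a) - of_bool (x = b) :: 'b :: ring_1)
    = of_bool (z = a) - of_bool (z = b)"
proof -
  have "(\<Sum>x\<in>{x. (x, z) \<in> level_rel lv}. of_bool (x = a) - of_bool (x = b) :: 'b)
      = of_bool ((a, z) \<in> level_rel lv) - of_bool ((b, z) \<in> level_rel lv)"
    using assms(1) by (simp add: sum_subtractf)
  also have "\<dots> = of_bool (z = a) - of_bool (z = b)"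
    using assms(2,3) by (auto simp: level_rel_def)
  finally show ?thesis .
qed

lemma mobius_refl: "mobius r x x = 1"
  by (subst mobius.simps) simp

lemma mobius_less:
  assumes "partial_order_on UNIV r" "locally_finite_rel r" "(x, y) \<in> r" "x \<noteq> y"
  shows "mobius r x y = - (\<Sum>z\<in>Icc_rel r x y - {y}. mobius r x z)"
proof -
  have "card (Icc_rel r x z) < card (Icc_rel r x y)" if z: "z \<in> Icc_rel r x y - {y}" for z
  proof (rule psubset_card_mono)
    show "finite (Icc_rel r x y)"
      using assms(2) by (simp add: locally_finite_rel_def)
    have "Icc_rel r x z \<subseteq> Icc_rel r x y"
      using z assms(1) unfolding Icc_rel_def partial_order_on_def preorder_on_def trans_def
      by blast
    moreover have "y \<notin> Icc_rel r x z"
      using z assms(1) unfolding Icc_rel_def partial_order_on_def antisym_def by blast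
    moreover have "y \<in> Icc_rel r x y"
      using assms(1,3) unfolding Icc_rel_def partial_order_on_def preorder_on_def refl_on_def
      by blast
    ultimately show "Icc_rel r x z \<subset> Icc_rel r x y"
      by blast
  qed
  then have "{z. (x, z) \<in> r \<and> (z, y) \<in> r \<and> z \<noteq> y \<and> card (Icc_rel r x z) < card (Icc_rel r x y)}
      = Icc_rel r x y - {y}"
    by (auto simp: Icc_rel_def)
  then show ?thesis
    using assms(3,4) by (subst mobius.simps) simp
qed

lemma alternating_sum_greaterThanLessThan:
  assumes "a < b"
  shows "1 + 2 * (\<Sum>n\<in>{a<..<b}. (-1::int) ^ (n - a)) = - ((-1) ^ (b - a))"
  using assms
proof (induction b)
  case 0
  then show ?case by simp
next
  case (Suc b)
  show ?case
  proof (cases "a = b")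
    case True
    then show ?thesis by simp
  next
    case False
    with Suc.prems have "a < b" by simp
    then have "{a<..<Suc b} = insert b {a<..<b}" "Suc b - a = Suc (b - a)"
      by auto
    then show ?thesis
      using Suc.IH[OF \<open>a < b\<close>] by simp
  qed
qed

lemma mobius_level_rel:
  assumes fin: "\<And>n. finite {z. lv z = n}" and two: "\<And>n. 0 < n \<Longrightarrow> card {z. lv z = n} = 2"
    and "lv x < lv y"
  shows "mobius (level_rel lv) x y = (-1) ^ (lv y - lv x)"
  using assms(3)
proof (induction "lv y" arbitrary: y rule: less_induct)
  case less
  let ?r = "level_rel lv"
  have strict_below: "Icc_rel ?r x y - {y} = insert x (\<Union>n\<in>{lv x<..<lv y}. {z. lv z = n})"
    using less.prems by (auto simp: Icc_rel_def level_rel_def)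
  have level_sum: "(\<Sum>z\<in>{z. lv z = n}. mobius ?r x z) = 2 * (-1) ^ (n - lv x)"
    if "n \<in> {lv x<..<lv y}" for n
  proof -
    have "(\<Sum>z\<in>{z. lv z = n}. mobius ?r x z) = (\<Sum>z\<in>{z. lv z = n}. (-1) ^ (n - lv x))"
      using that by (intro sum.cong refl) (auto intro: less.hyps)
    also have "\<dots> = 2 * (-1) ^ (n - lv x)"
      using two[of n] that by simp
    finally show ?thesis .
  qed
  have "mobius ?r x y = - (\<Sum>z\<in>Icc_rel ?r x y - {y}. mobius ?r x z)"
    using less.prems
    by (intro mobius_less partial_order_level_rel locally_finite_level_rel fin)
      (auto simp: level_rel_def)
  also have "\<dots> = - (1 + (\<Sum>z\<in>(\<Union>n\<in>{lv x<..<lv y}. {z. lv z = n}). mobius ?r x z))"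
    unfolding strict_below using fin by (simp add: mobius_refl)
  also have "\<dots> = - (1 + (\<Sum>n\<in>{lv x<..<lv y}. \<Sum>z\<in>{z. lv z = n}. mobius ?r x z))"
    using fin by (subst sum.UNION_disjoint) auto
  also have "\<dots> = - (1 + 2 * (\<Sum>n\<in>{lv x<..<lv y}. (-1) ^ (n - lv x)))"
    by (simp add: level_sum sum_distrib_left)
  also have "\<dots> = (-1) ^ (lv y - lv x)"
    using alternating_sum_greaterThanLessThan[OF less.prems] by simp
  finally show ?case .
qed

definition pair_rank :: "nat \<Rightarrow> nat" where
  "pair_rank n = (n + 1) div 2"

lemma pair_rank_level: "0 < k \<Longrightarrow> {n. pair_rank n = k} = {2 * k - 1, 2 * k}"
  unfolding pair_rank_def by auto

lemma finite_pair_rank_level: "finite {n. pair_rank n = k}"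
  by (rule finite_subset[of _ "{..2 * k}"]) (auto simp: pair_rank_def)

lemma card_pair_rank_level: "0 < k \<Longrightarrow> card {n. pair_rank n = k} = 2"
  by (simp add: pair_rank_level)

lemma infinite_mobius_nonzero_pair_rank: "infinite {y. mobius (level_rel pair_rank) x y \<noteq> 0}"
proof -
  have "{2 * pair_rank x + 1..} \<subseteq> {y. pair_rank x < pair_rank y}"
    by (auto simp: pair_rank_def)
  also have "\<dots> \<subseteq> {y. mobius (level_rel pair_rank) x y \<noteq> 0}"
    by (auto simp: mobius_level_rel finite_pair_rank_level card_pair_rank_level)
  finally show ?thesis
    using infinite_Ici finite_subset by blast
qed

theorem theorem1p6:
  shows "\<exists>r :: (nat \<times> nat) set.
    partial_order_on UNIV r \<and>
    locally_finite_rel r \<and>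
    (\<exists>m. \<forall>x. (m, x) \<in> r) \<and>
    (\<forall>x. infinite {y. mobius r x y \<noteq> 0}) \<and>
    (\<exists>a b. a \<noteq> b \<and>
       finite {x. (a, x) \<in> r \<and> (b, x) \<notin> r} \<and>
       finite {x. (b, x) \<in> r \<and> (a, x) \<notin> r}) \<and>
    (\<exists>f g :: nat \<Rightarrow> complex.
       (\<exists>x. f x \<noteq> 0) \<and> (\<exists>x. g x \<noteq> 0) \<and>
       (\<forall>z. g z = (\<Sum>x\<in>{x. (x, z) \<in> r}. f x)) \<and>
       finite {x. f x \<noteq> 0} \<and> finite {x. g x \<noteq> 0})"
proof (intro exI[of _ "level_rel pair_rank"] conjI allI)
  let ?r = "level_rel pair_rank"
  let ?dipole = "\<lambda>x :: nat. of_bool (x = 1) - of_bool (x = 2) :: complex"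
  show "partial_order_on UNIV ?r"
    by (rule partial_order_level_rel)
  show "locally_finite_rel ?r"
    by (intro locally_finite_level_rel finite_pair_rank_level)
  show "\<exists>m. \<forall>x. (m, x) \<in> ?r"
    by (intro exI[of _ 0]) (auto simp: level_rel_def pair_rank_def)
  show "infinite {y. mobius ?r x y \<noteq> 0}" for x
    by (rule infinite_mobius_nonzero_pair_rank)
  show "\<exists>a b. a \<noteq> b \<and> finite {x. (a, x) \<in> ?r \<and> (b, x) \<notin> ?r}
      \<and> finite {x. (b, x) \<in> ?r \<and> (a, x) \<notin> ?r}"
    using up_diff_level_rel_same_level[of pair_rank]
    by (intro exI[of _ 1] exI[of _ 2]) (simp add: pair_rank_def)
  have zeta_dipole: "(\<Sum>x\<in>{x. (x, z) \<in> ?r}. ?dipole x) = ?dipole z" for z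
    by (rule sum_down_level_rel_dipole[OF finite_down_level_rel[OF finite_pair_rank_level]])
      (simp_all add: pair_rank_def)
  have dipole_support: "{x. ?dipole x \<noteq> 0} = {1, 2}"
    by auto
  show "\<exists>f g :: nat \<Rightarrow> complex. (\<exists>x. f x \<noteq> 0) \<and> (\<exists>x. g x \<noteq> 0)
      \<and> (\<forall>z. g z = (\<Sum>x\<in>{x. (x, z) \<in> ?r}. f x))
      \<and> finite {x. f x \<noteq> 0} \<and> finite {x. g x \<noteq> 0}"
    using zeta_dipole dipole_support by (intro exI[of _ ?dipole] conjI exI[of _ 1]) simp_all
qed

end
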